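(* Let $(Y,\preceq,\prec,\to)$ be a normal solid vector space. Then: (C8) each subsequence of a convergent sequence converges to the same limit; (C9) the convergence of a sequence and its limit do not depend on finitely many of its terms; (C10) if $\lambda_n\to\lambda$ in $\mathbb R$ and $x_n\to x$, then $\lambda_nx_n\to\lambda x$; (C11) if $\lambda_n\to0$ in $\mathbb R$ and $(x_n)$ is bounded in $Y$ (there exist $a,b\in Y$ with $a\preceq x_n\preceq b$ for all $n$), then $\lambda_nx_n\to0$; (C12) if $(\lambda_n)$ is a bounded real sequence and $x_n\to0$, then $\lambda_nx_n\to0$; (C13) for every sequence $(x_n)$ in $Y$ and $x\in Y$, $x_n\to x$ if and only if for every $c\succ0$ there exists $N\in\mathbb N$ with $x-c\prec x_n\prec x+c$ for all $n>N$.
   Context: Vector space with convergence: a real vector space $Y$ with a relation $\to$ between sequences in $Y$ and points of $Y$ (uniqueness of limits not assumed) such that (C1) $x_n\to x$, $y_n\to y$ imply $x_n+y_n\to x+y$; (C2) $x_n\to x$, $\lambda\in\mathbb R$ imply $\lambda x_n\to\lambda x$; (C3) $\lambda_n\to\lambda$ in $\mathbb R$ imply $\lambda_n x\to\lambda x$. $A\subseteq Y$ is open if $x_n\to x\in A$ implies $x_n\in A$ for all but finitely many $n$; closed if $x_n\to x$, $x_n\in A$ $\forall n$ imply $x\in A$; $A^\circ$ is the union of all open subsets of $A$. A cone is a nonempty closed $K$ with $\lambda K\subseteq K$ ($\lambda\ge0$), $K+K\subseteq K$, $K\cap(-K)=\{0\}$; solid if $K\ne\{0\}$, $K^\circ\ne\emptyset$.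 A vector ordering is a partial order $\preceq$ with (V1) $x\preceq y\Rightarrow x+z\preceq y+z$; (V2) $\lambda\ge0$, $x\preceq y\Rightarrow\lambda x\preceq\lambda y$; (V3) $x_n\to x$, $y_n\to y$, $x_n\preceq y_n$ $\forall n\Rightarrow x\preceq y$. Solid vector space: positive cone $K=\{x:x\succeq0\}$ solid, with $x\prec y$ iff $y-x\in K^\circ$. Normal: whenever $x_n\preceq y_n\preceq z_n$ for all $n$, $x_n\to x$ and $z_n\to x$, then $y_n\to x$. *)

theory Defs
  imports "HOL-Analysis.Analysis"
begin

text \<open>A convergence on a real vector space is a relation conv between sequences
  and points (uniqueness of limits not assumed).\<close>

definition vsc :: "((nat \<Rightarrow> 'a::real_vector) \<Rightarrow> 'a \<Rightarrow> bool) \<Rightarrow> bool" where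
  "vsc conv \<longleftrightarrow>
     (\<forall>xs ys x y. conv xs x \<longrightarrow> conv ys y \<longrightarrow> conv (\<lambda>n. xs n + ys n) (x + y)) \<and>
     (\<forall>xs x (c::real). conv xs x \<longrightarrow> conv (\<lambda>n. c *\<^sub>R xs n) (c *\<^sub>R x)) \<and>
     (\<forall>(cs::nat \<Rightarrow> real) c x. cs \<longlonglongrightarrow> c \<longrightarrow> conv (\<lambda>n. cs n *\<^sub>R x) (c *\<^sub>R x))"

definition c_open :: "((nat \<Rightarrow> 'a) \<Rightarrow> 'a \<Rightarrow> bool) \<Rightarrow> 'a set \<Rightarrow> bool" where
  "c_open conv A \<longleftrightarrow>
     (\<forall>xs x. conv xs x \<longrightarrow> x \<in> A \<longrightarrow> (\<forall>\<^sub>F n in sequentially. xs n \<in> A))"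

definition c_closed :: "((nat \<Rightarrow> 'a) \<Rightarrow> 'a \<Rightarrow> bool) \<Rightarrow> 'a set \<Rightarrow> bool" where
  "c_closed conv A \<longleftrightarrow> (\<forall>xs x. conv xs x \<longrightarrow> (\<forall>n. xs n \<in> A) \<longrightarrow> x \<in> A)"

definition c_interior :: "((nat \<Rightarrow> 'a) \<Rightarrow> 'a \<Rightarrow> bool) \<Rightarrow> 'a set \<Rightarrow> 'a set" where
  "c_interior conv A = \<Union>{U. U \<subseteq> A \<and> c_open conv U}"

definition c_cone :: "((nat \<Rightarrow> 'a::real_vector) \<Rightarrow> 'a \<Rightarrow> bool) \<Rightarrow> 'a set \<Rightarrow> bool" where
  "c_cone conv K \<longleftrightarrow> K \<noteq> {} \<and> c_closed conv K \<and>
     (\<forall>c::real. \<forall>x\<in>K. c \<ge> 0 \<longrightarrow> c *\<^sub>R x \<in> K) \<and>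
     (\<forall>x\<in>K. \<forall>y\<in>K. x + y \<in> K) \<and> K \<inter> uminus ` K = {0}"

definition c_solid_cone :: "((nat \<Rightarrow> 'a::real_vector) \<Rightarrow> 'a \<Rightarrow> bool) \<Rightarrow> 'a set \<Rightarrow> bool" where
  "c_solid_cone conv K \<longleftrightarrow> c_cone conv K \<and> K \<noteq> {0} \<and> c_interior conv K \<noteq> {}"

definition vector_ordering ::
  "((nat \<Rightarrow> 'a::real_vector) \<Rightarrow> 'a \<Rightarrow> bool) \<Rightarrow> ('a \<Rightarrow> 'a \<Rightarrow> bool) \<Rightarrow> bool" where
  "vector_ordering conv le \<longleftrightarrow>
     (\<forall>x. le x x) \<and> (\<forall>x y. le x y \<longrightarrow> le y x \<longrightarrow> x = y) \<and>
     (\<forall>x y z. le x y \<longrightarrow> le y z \<longrightarrow> le x z) \<and>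
     (\<forall>x y z. le x y \<longrightarrow> le (x + z) (y + z)) \<and>
     (\<forall>(c::real) x y. c \<ge> 0 \<longrightarrow> le x y \<longrightarrow> le (c *\<^sub>R x) (c *\<^sub>R y)) \<and>
     (\<forall>xs ys x y. conv xs x \<longrightarrow> conv ys y \<longrightarrow> (\<forall>n. le (xs n) (ys n)) \<longrightarrow> le x y)"

definition solid_vector_space ::
  "((nat \<Rightarrow> 'a::real_vector) \<Rightarrow> 'a \<Rightarrow> bool) \<Rightarrow> ('a \<Rightarrow> 'a \<Rightarrow> bool) \<Rightarrow> ('a \<Rightarrow> 'a \<Rightarrow> bool) \<Rightarrow> bool" where
  "solid_vector_space conv le lt \<longleftrightarrow>
     vsc conv \<and> vector_ordering conv le \<and> c_solid_cone conv {x. le 0 x} \<and>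
     (\<forall>x y. lt x y \<longleftrightarrow> y - x \<in> c_interior conv {x. le 0 x})"

definition c_normal ::
  "((nat \<Rightarrow> 'a) \<Rightarrow> 'a \<Rightarrow> bool) \<Rightarrow> ('a \<Rightarrow> 'a \<Rightarrow> bool) \<Rightarrow> bool" where
  "c_normal conv le \<longleftrightarrow>
     (\<forall>xs ys zs x. (\<forall>n. le (xs n) (ys n) \<and> le (ys n) (zs n)) \<longrightarrow>
        conv xs x \<longrightarrow> conv zs x \<longrightarrow> conv ys x)"

end

theory Submission
  imports Defs
begin

text \<open>By normality and (C3), a sequence squeezed as \<open>-(t\<^sub>n e) \<preceq> y\<^sub>n \<preceq> t\<^sub>n e\<close> with real
  \<open>t\<^sub>n \<rightarrow> 0\<close> converges to 0. Fix \<open>e\<close> in the interior of the positive cone. Openness of the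
  interior makes \<open>e\<close> an order unit, so the order gauge \<open>g(v) = inf {t \<ge> 0. -(t e) \<preceq> v \<preceq> t e}\<close>
  is finite, and closedness of the order makes the infimum attained. Hence \<open>x\<^sub>n \<rightarrow> x\<close> as soon
  as \<open>g(x\<^sub>n - x) \<rightarrow> 0\<close>, which is what the condition of (C13) gives, as \<open>t e\<close> is interior for
  \<open>t > 0\<close>; the converse of (C13) is openness of the interior. (C8) and (C9) are immediate from
  (C13), (C12) follows from \<open>g(\<lambda> v) \<le> |\<lambda>| g(v)\<close>, (C10) from
  \<open>\<lambda>\<^sub>n x\<^sub>n - \<lambda> x = \<lambda>\<^sub>n (x\<^sub>n - x) + (\<lambda>\<^sub>n - \<lambda>) x\<close>, and (C11) by squeezing
  \<open>\<lambda>\<^sub>n (x\<^sub>n - a)\<close> between \<open>\<plusminus>|\<lambda>\<^sub>n| (b - a)\<close>.\<close>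

locale normal_solid_vector_space =
  fixes conv :: "(nat \<Rightarrow> 'a::real_vector) \<Rightarrow> 'a \<Rightarrow> bool"
    and le :: "'a \<Rightarrow> 'a \<Rightarrow> bool" (infix "\<sqsubseteq>" 50)
    and lt :: "'a \<Rightarrow> 'a \<Rightarrow> bool" (infix "\<sqsubset>" 50)
  assumes solid: "solid_vector_space conv le lt"
    and normal: "c_normal conv le"
begin

abbreviation cone_interior :: "'a set" where
  "cone_interior \<equiv> c_interior conv {x. 0 \<sqsubseteq> x}"

lemma conv_add: "conv xs x \<Longrightarrow> conv ys y \<Longrightarrow> conv (\<lambda>n. xs n + ys n) (x + y)"
  using solid unfolding solid_vector_space_def vsc_def by blast

lemma conv_scaleR: "conv xs x \<Longrightarrow> conv (\<lambda>n. c *\<^sub>R xs n) (c *\<^sub>R x)"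
  using solid unfolding solid_vector_space_def vsc_def by blast

lemma conv_scaleR_left: "cs \<longlonglongrightarrow> c \<Longrightarrow> conv (\<lambda>n. cs n *\<^sub>R x) (c *\<^sub>R x)"
  using solid unfolding solid_vector_space_def vsc_def by blast

lemma conv_const: "conv (\<lambda>n. x) x"
  using conv_scaleR_left[of "\<lambda>n. 1" 1 x] by simp

lemma conv_diff: "conv xs x \<Longrightarrow> conv ys y \<Longrightarrow> conv (\<lambda>n. xs n - ys n) (x - y)"
  using conv_add[of xs x "\<lambda>n. (-1) *\<^sub>R ys n" "(-1) *\<^sub>R y"] conv_scaleR[of ys y "-1"] by simp

lemma conv_diff_zero_iff: "conv (\<lambda>n. xs n - x) 0 \<longleftrightarrow> conv xs x"
  using conv_add[OF _ conv_const, of "\<lambda>n. xs n - x" 0 x] conv_diff[OF _ conv_const, of xs x x]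
  by auto

lemma le_trans: "x \<sqsubseteq> y \<Longrightarrow> y \<sqsubseteq> z \<Longrightarrow> x \<sqsubseteq> z"
  using solid unfolding solid_vector_space_def vector_ordering_def by blast

lemma le_add_right: "x \<sqsubseteq> y \<Longrightarrow> x + z \<sqsubseteq> y + z"
  using solid unfolding solid_vector_space_def vector_ordering_def by blast

lemma le_scaleR: "0 \<le> c \<Longrightarrow> x \<sqsubseteq> y \<Longrightarrow> c *\<^sub>R x \<sqsubseteq> c *\<^sub>R y"
  using solid unfolding solid_vector_space_def vector_ordering_def by blast

lemma le_closed: "conv xs x \<Longrightarrow> conv ys y \<Longrightarrow> (\<And>n. xs n \<sqsubseteq> ys n) \<Longrightarrow> x \<sqsubseteq> y"
  using solid unfolding solid_vector_space_def vector_ordering_def by blast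

lemma lt_iff_interior: "x \<sqsubset> y \<longleftrightarrow> y - x \<in> cone_interior"
  using solid unfolding solid_vector_space_def by blast

lemma le_iff_diff_nonneg: "x \<sqsubseteq> y \<longleftrightarrow> 0 \<sqsubseteq> y - x"
  using le_add_right[of x y "-x"] le_add_right[of 0 "y - x" x] by auto

lemma le_minus: "x \<sqsubseteq> y \<Longrightarrow> -y \<sqsubseteq> -x"
  by (simp add: le_iff_diff_nonneg[of x] le_iff_diff_nonneg[of "-y"])

lemma interior_subset_cone: "u \<in> cone_interior \<Longrightarrow> 0 \<sqsubseteq> u"
  unfolding c_interior_def by blast

lemma lt_imp_le: "x \<sqsubset> y \<Longrightarrow> x \<sqsubseteq> y"
  using lt_iff_interior interior_subset_cone le_iff_diff_nonneg by blast

lemma interior_nonempty: "cone_interior \<noteq> {}"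
  using solid unfolding solid_vector_space_def c_solid_cone_def by blast

lemma eventually_in_interior:
  "conv xs x \<Longrightarrow> x \<in> cone_interior \<Longrightarrow> \<forall>\<^sub>F n in sequentially. xs n \<in> cone_interior"
  unfolding c_interior_def c_open_def by (blast intro: eventually_mono)

lemma c_open_scaleR:
  assumes "s \<noteq> 0" and "c_open conv U"
  shows "c_open conv ((*\<^sub>R) s ` U)"
  unfolding c_open_def
proof (intro allI impI)
  fix xs y assume "conv xs y" and "y \<in> (*\<^sub>R) s ` U"
  then have "conv (\<lambda>n. inverse s *\<^sub>R xs n) (inverse s *\<^sub>R y)" and "inverse s *\<^sub>R y \<in> U"
    using conv_scaleR \<open>s \<noteq> 0\<close> by auto
  then have "\<forall>\<^sub>F n in sequentially. inverse s *\<^sub>R xs n \<in> U"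
    using \<open>c_open conv U\<close> unfolding c_open_def by blast
  then show "\<forall>\<^sub>F n in sequentially. xs n \<in> (*\<^sub>R) s ` U"
    by (rule eventually_mono) (use \<open>s \<noteq> 0\<close> in \<open>force simp: image_iff\<close>)
qed

lemma interior_scaleR:
  assumes "0 < s" and "u \<in> cone_interior"
  shows "s *\<^sub>R u \<in> cone_interior"
proof -
  obtain U where "U \<subseteq> {x. 0 \<sqsubseteq> x}" "c_open conv U" "u \<in> U"
    using assms(2) unfolding c_interior_def by blast
  moreover have "(*\<^sub>R) s ` U \<subseteq> {x. 0 \<sqsubseteq> x}"
    using \<open>U \<subseteq> {x. 0 \<sqsubseteq> x}\<close> le_scaleR[of s 0] \<open>0 < s\<close> by auto
  ultimately show ?thesis
    using c_open_scaleR[of s U] \<open>0 < s\<close> unfolding c_interior_def by blast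
qed

lemma conv_imp_eventually_between:
  assumes "conv xs x" and "0 \<sqsubset> c"
  shows "\<forall>\<^sub>F n in sequentially. x - c \<sqsubset> xs n \<and> xs n \<sqsubset> x + c"
proof -
  have "c \<in> cone_interior" using assms(2) lt_iff_interior by simp
  moreover have "conv (\<lambda>n. xs n - (x - c)) c" and "conv (\<lambda>n. (x + c) - xs n) c"
    using conv_diff[OF assms(1) conv_const, of "x - c"] conv_diff[OF conv_const assms(1), of "x + c"]
    by simp_all
  ultimately have "\<forall>\<^sub>F n in sequentially. xs n - (x - c) \<in> cone_interior"
      and "\<forall>\<^sub>F n in sequentially. (x + c) - xs n \<in> cone_interior"
    using eventually_in_interior by blast+
  then show ?thesis
    unfolding lt_iff_interior by (rule eventually_conj)
qed

definition abs_le :: "'a \<Rightarrow> 'a \<Rightarrow> bool" where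
  "abs_le v c \<longleftrightarrow> -c \<sqsubseteq> v \<and> v \<sqsubseteq> c"

lemma abs_le_diff_iff: "abs_le (y - x) c \<longleftrightarrow> x - c \<sqsubseteq> y \<and> y \<sqsubseteq> x + c"
  unfolding abs_le_def le_iff_diff_nonneg[of "-c"] le_iff_diff_nonneg[of "y - x"]
    le_iff_diff_nonneg[of "x - c"] le_iff_diff_nonneg[of y]
  by (simp add: algebra_simps)

lemma abs_le_if_nonneg:
  assumes "0 \<sqsubseteq> v" and "v \<sqsubseteq> c"
  shows "abs_le v c"
proof -
  have "- c \<sqsubseteq> 0"
    using le_minus[OF le_trans[OF assms]] by simp
  with assms show ?thesis
    unfolding abs_le_def using le_trans by blast
qed

lemma abs_le_scaleR:
  assumes "abs_le v c"
  shows "abs_le (s *\<^sub>R v) (\<bar>s\<bar> *\<^sub>R c)"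
proof -
  have "abs_le (\<bar>s\<bar> *\<^sub>R v) (\<bar>s\<bar> *\<^sub>R c)"
    using assms le_scaleR[of "\<bar>s\<bar>"] unfolding abs_le_def by force
  then show ?thesis
    unfolding abs_le_def using le_minus by (cases "0 \<le> s") force+
qed

lemma abs_le_closed:
  assumes "ts \<longlonglongrightarrow> t" and "\<And>k. abs_le v (ts k *\<^sub>R e)"
  shows "abs_le v (t *\<^sub>R e)"
proof -
  have "conv (\<lambda>k. ts k *\<^sub>R e) (t *\<^sub>R e)" and "conv (\<lambda>k. - (ts k *\<^sub>R e)) (- (t *\<^sub>R e))"
    using conv_scaleR_left[OF assms(1)] conv_scaleR[of _ _ "-1"] by force+
  then show ?thesis
    using assms(2) le_closed[OF _ conv_const] le_closed[OF conv_const]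
    unfolding abs_le_def by metis
qed

lemma conv_zero_if_abs_le:
  assumes "ts \<longlonglongrightarrow> 0" and "\<And>n. abs_le (v n) (ts n *\<^sub>R e)"
  shows "conv v 0"
proof -
  have upper: "conv (\<lambda>n. ts n *\<^sub>R e) 0" and lower: "conv (\<lambda>n. - (ts n *\<^sub>R e)) 0"
    using conv_scaleR_left[OF assms(1)] conv_scaleR[of _ _ "-1"] by force+
  have "- (ts n *\<^sub>R e) \<sqsubseteq> v n \<and> v n \<sqsubseteq> ts n *\<^sub>R e" for n
    using assms(2) unfolding abs_le_def by blast
  from normal[unfolded c_normal_def, rule_format, OF this lower upper] show ?thesis .
qed

lemma interior_absorbing:
  assumes "e \<in> cone_interior"
  shows "\<exists>t\<ge>0. abs_le v (t *\<^sub>R e)"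
proof -
  have "\<forall>\<^sub>F n in sequentially. e + inverse (real (Suc n)) *\<^sub>R w \<in> cone_interior" for w
  proof -
    have "conv (\<lambda>n. e + inverse (real (Suc n)) *\<^sub>R w) (e + 0 *\<^sub>R w)"
      by (intro conv_add conv_const conv_scaleR_left LIMSEQ_inverse_real_of_nat)
    then have "conv (\<lambda>n. e + inverse (real (Suc n)) *\<^sub>R w) e"
      by simp
    from eventually_in_interior[OF this assms] show ?thesis .
  qed
  from eventually_conj[OF this[of v] this[of "-v"]]
  obtain n where "e + inverse (real (Suc n)) *\<^sub>R v \<in> cone_interior"
      and "e + inverse (real (Suc n)) *\<^sub>R (-v) \<in> cone_interior"
    unfolding eventually_sequentially by blast
  moreover have "0 \<sqsubseteq> real (Suc n) *\<^sub>R e + w"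
    if "e + inverse (real (Suc n)) *\<^sub>R w \<in> cone_interior" for w
  proof -
    have "0 \<sqsubseteq> real (Suc n) *\<^sub>R (e + inverse (real (Suc n)) *\<^sub>R w)"
      using le_scaleR[OF _ interior_subset_cone[OF that], of "real (Suc n)"] by simp
    then show ?thesis
      by (simp add: scaleR_add_right del: of_nat_Suc)
  qed
  ultimately have "0 \<sqsubseteq> real (Suc n) *\<^sub>R e + v" and "0 \<sqsubseteq> real (Suc n) *\<^sub>R e + - v"
    by blast+
  then have "abs_le v (real (Suc n) *\<^sub>R e)"
    unfolding abs_le_def le_iff_diff_nonneg[of "- _"] le_iff_diff_nonneg[of v]
    by (simp add: algebra_simps)
  then show ?thesis
    using of_nat_0_le_iff by blast
qed

text \<open>It is only meaningful for
  \<open>e\<close> in the cone interior; otherwise the set may be empty and \<open>Inf\<close> returns junk.\<close>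

definition gauge :: "'a \<Rightarrow> 'a \<Rightarrow> real" where
  "gauge e v = Inf {t. 0 \<le> t \<and> abs_le v (t *\<^sub>R e)}"

lemma gauge_nonneg: "e \<in> cone_interior \<Longrightarrow> 0 \<le> gauge e v"
  unfolding gauge_def using interior_absorbing by (intro cInf_greatest) auto

lemma gauge_le: "0 \<le> t \<Longrightarrow> abs_le v (t *\<^sub>R e) \<Longrightarrow> gauge e v \<le> t"
  unfolding gauge_def by (rule cInf_lower) (auto intro: bdd_belowI[of _ 0])

lemma abs_le_gauge:
  assumes "e \<in> cone_interior"
  shows "abs_le v (gauge e v *\<^sub>R e)"
proof -
  let ?S = "{t. 0 \<le> t \<and> abs_le v (t *\<^sub>R e)}"
  have "gauge e v \<in> closure ?S"
    unfolding gauge_def using interior_absorbing[OF assms]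
    by (intro closure_contains_Inf) (auto intro: bdd_belowI[of _ 0])
  then obtain ts where "\<And>k. ts k \<in> ?S" and "ts \<longlonglongrightarrow> gauge e v"
    unfolding closure_sequential by blast
  then show ?thesis using abs_le_closed by blast
qed

lemma gauge_tendsto_zero:
  assumes "e \<in> cone_interior"
    and small: "\<And>\<epsilon>. 0 < \<epsilon> \<Longrightarrow> \<forall>\<^sub>F n in sequentially. abs_le (v n) (\<epsilon> *\<^sub>R e)"
  shows "(\<lambda>n. gauge e (v n)) \<longlonglongrightarrow> 0"
proof (rule order_tendstoI)
  fix a :: real assume "a < 0"
  then show "\<forall>\<^sub>F n in sequentially. a < gauge e (v n)"
    using gauge_nonneg[OF assms(1)] by (simp add: less_le_trans)
next
  fix a :: real assume "0 < a"
  have "\<forall>\<^sub>F n in sequentially. abs_le (v n) ((a / 2) *\<^sub>R e)"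
    using small \<open>0 < a\<close> by simp
  then show "\<forall>\<^sub>F n in sequentially. gauge e (v n) < a"
  proof (rule eventually_mono)
    fix n assume "abs_le (v n) ((a / 2) *\<^sub>R e)"
    then show "gauge e (v n) < a"
      using gauge_le[of "a / 2"] \<open>0 < a\<close> by fastforce
  qed
qed

lemma conv_imp_eventually_abs_le:
  assumes "conv xs x" and "e \<in> cone_interior" and "0 < \<epsilon>"
  shows "\<forall>\<^sub>F n in sequentially. abs_le (xs n - x) (\<epsilon> *\<^sub>R e)"
proof -
  have "0 \<sqsubset> \<epsilon> *\<^sub>R e"
    using interior_scaleR[OF assms(3,2)] by (simp add: lt_iff_interior)
  from conv_imp_eventually_between[OF assms(1) this] show ?thesis
    by (rule eventually_mono) (simp add: abs_le_diff_iff lt_imp_le)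
qed

theorem conv_iff_eventually_between:
  "conv xs x \<longleftrightarrow> (\<forall>c. 0 \<sqsubset> c \<longrightarrow> (\<forall>\<^sub>F n in sequentially. x - c \<sqsubset> xs n \<and> xs n \<sqsubset> x + c))"
proof (intro iffI allI impI)
  assume between: "\<forall>c. 0 \<sqsubset> c \<longrightarrow> (\<forall>\<^sub>F n in sequentially. x - c \<sqsubset> xs n \<and> xs n \<sqsubset> x + c)"
  obtain e where e: "e \<in> cone_interior" using interior_nonempty by blast
  have "\<forall>\<^sub>F n in sequentially. abs_le (xs n - x) (\<epsilon> *\<^sub>R e)" if "0 < \<epsilon>" for \<epsilon>
  proof -
    have "0 \<sqsubset> \<epsilon> *\<^sub>R e"
      using interior_scaleR[OF that e] by (simp add: lt_iff_interior)
    from between[rule_format, OF this] show ?thesis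
      by (rule eventually_mono) (simp add: abs_le_diff_iff lt_imp_le)
  qed
  then have "(\<lambda>n. gauge e (xs n - x)) \<longlonglongrightarrow> 0"
    by (rule gauge_tendsto_zero[OF e])
  then have "conv (\<lambda>n. xs n - x) 0"
    by (rule conv_zero_if_abs_le) (rule abs_le_gauge[OF e])
  then show "conv xs x" by (simp add: conv_diff_zero_iff)
qed (rule conv_imp_eventually_between)

lemma conv_subseq:
  assumes "conv xs x" and "strict_mono r"
  shows "conv (xs \<circ> r) x"
  unfolding conv_iff_eventually_between
proof (intro allI impI)
  fix c assume "0 \<sqsubset> c"
  with assms(1) have "\<forall>\<^sub>F n in sequentially. x - c \<sqsubset> xs n \<and> xs n \<sqsubset> x + c"
    by (rule conv_imp_eventually_between)
  from eventually_compose_filterlim[OF this filterlim_subseq[OF assms(2)]]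
  show "\<forall>\<^sub>F n in sequentially. x - c \<sqsubset> (xs \<circ> r) n \<and> (xs \<circ> r) n \<sqsubset> x + c"
    by simp
qed

lemma conv_eventually_eq:
  assumes "\<forall>\<^sub>F n in sequentially. xs n = ys n" and "conv xs x"
  shows "conv ys x"
  unfolding conv_iff_eventually_between
proof (intro allI impI)
  fix c assume "0 \<sqsubset> c"
  with assms(2) have "\<forall>\<^sub>F n in sequentially. x - c \<sqsubset> xs n \<and> xs n \<sqsubset> x + c"
    by (rule conv_imp_eventually_between)
  with assms(1) show "\<forall>\<^sub>F n in sequentially. x - c \<sqsubset> ys n \<and> ys n \<sqsubset> x + c"
    by (rule eventually_elim2) simp
qed

lemma conv_cong_eventually:
  assumes "\<forall>\<^sub>F n in sequentially. xs n = ys n"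
  shows "conv xs x \<longleftrightarrow> conv ys x"
proof -
  have "\<forall>\<^sub>F n in sequentially. ys n = xs n"
    using assms by (rule eventually_mono) simp
  with assms show ?thesis
    using conv_eventually_eq by blast
qed

lemma conv_scaleR_Bseq:
  assumes "Bseq cs" and "conv xs 0"
  shows "conv (\<lambda>n. cs n *\<^sub>R xs n) 0"
proof -
  obtain K where "\<And>n. \<bar>cs n\<bar> \<le> K" using assms(1) by (metis BseqE real_norm_def)
  obtain e where e: "e \<in> cone_interior" using interior_nonempty by blast
  define g where "g n = gauge e (xs n)" for n
  have "g \<longlonglongrightarrow> 0"
    unfolding g_def using gauge_tendsto_zero[OF e] conv_imp_eventually_abs_le[OF assms(2) e] by simp
  have lim: "(\<lambda>n. \<bar>cs n\<bar> * g n) \<longlonglongrightarrow> 0"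
  proof (rule tendsto_sandwich[of "\<lambda>_. 0" _ _ "\<lambda>n. K * g n"])
    show "(\<lambda>n. K * g n) \<longlonglongrightarrow> 0"
      using tendsto_mult_right_zero[OF \<open>g \<longlonglongrightarrow> 0\<close>] by simp
    show "\<forall>\<^sub>F n in sequentially. \<bar>cs n\<bar> * g n \<le> K * g n"
      using \<open>\<And>n. \<bar>cs n\<bar> \<le> K\<close> gauge_nonneg[OF e] by (simp add: g_def mult_right_mono)
  qed (use gauge_nonneg[OF e] in \<open>simp_all add: g_def\<close>)
  have "abs_le (cs n *\<^sub>R xs n) ((\<bar>cs n\<bar> * g n) *\<^sub>R e)" for n
    using abs_le_scaleR[OF abs_le_gauge[OF e]] by (simp add: g_def)
  then show ?thesis
    by (intro conv_zero_if_abs_le[OF lim])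
qed

lemma conv_scaleR_order_bounded:
  assumes "cs \<longlonglongrightarrow> 0" and bounded: "\<And>n. a \<sqsubseteq> xs n \<and> xs n \<sqsubseteq> b"
  shows "conv (\<lambda>n. cs n *\<^sub>R xs n) 0"
proof -
  have "abs_le (cs n *\<^sub>R (xs n - a)) (\<bar>cs n\<bar> *\<^sub>R (b - a))" for n
  proof -
    have "0 \<sqsubseteq> xs n - a"
      using bounded[of n] le_iff_diff_nonneg[of a "xs n"] by blast
    moreover have "xs n - a \<sqsubseteq> b - a"
      using bounded[of n] le_add_right[of "xs n" b "-a"] by simp
    ultimately show ?thesis by (intro abs_le_scaleR abs_le_if_nonneg)
  qed
  then have "conv (\<lambda>n. cs n *\<^sub>R (xs n - a)) 0"
    by (intro conv_zero_if_abs_le[OF tendsto_rabs_zero[OF assms(1)]])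
  from conv_add[OF conv_scaleR_left[OF assms(1), of a] this] show ?thesis
    by (simp add: algebra_simps)
qed

lemma conv_scaleR_tendsto:
  assumes "cs \<longlonglongrightarrow> c" and "conv xs x"
  shows "conv (\<lambda>n. cs n *\<^sub>R xs n) (c *\<^sub>R x)"
proof -
  have "Bseq cs"
    using assms(1) by (rule convergent_imp_Bseq[OF convergentI])
  moreover have "conv (\<lambda>n. xs n - x) 0"
    using assms(2) by (simp add: conv_diff_zero_iff)
  ultimately have near: "conv (\<lambda>n. cs n *\<^sub>R (xs n - x)) 0"
    by (rule conv_scaleR_Bseq)
  have "conv (\<lambda>n. (cs n - c) *\<^sub>R x) (0 *\<^sub>R x)"
    using assms(1) by (intro conv_scaleR_left) (simp add: LIM_zero)
  from conv_add[OF conv_add[OF near this] conv_const[of "c *\<^sub>R x"]]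
  show ?thesis
    by (simp add: algebra_simps)
qed

end

theorem theorem7p10:
  fixes conv :: "(nat \<Rightarrow> 'a::real_vector) \<Rightarrow> 'a \<Rightarrow> bool"
    and le lt :: "'a \<Rightarrow> 'a \<Rightarrow> bool"
  assumes "solid_vector_space conv le lt"
    and "c_normal conv le"
  shows
    "(\<forall>xs x r. conv xs x \<longrightarrow> strict_mono r \<longrightarrow> conv (xs \<circ> r) x)
     \<and> (\<forall>xs ys x. (\<forall>\<^sub>F n in sequentially. xs n = ys n) \<longrightarrow> (conv xs x \<longleftrightarrow> conv ys x))
     \<and> (\<forall>(cs::nat \<Rightarrow> real) c xs x. cs \<longlonglongrightarrow> c \<longrightarrow> conv xs x \<longrightarrow>
           conv (\<lambda>n. cs n *\<^sub>R xs n) (c *\<^sub>R x))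
     \<and> (\<forall>(cs::nat \<Rightarrow> real) xs. cs \<longlonglongrightarrow> 0 \<longrightarrow> (\<exists>a b. \<forall>n. le a (xs n) \<and> le (xs n) b) \<longrightarrow>
           conv (\<lambda>n. cs n *\<^sub>R xs n) 0)
     \<and> (\<forall>(cs::nat \<Rightarrow> real) xs. Bseq cs \<longrightarrow> conv xs 0 \<longrightarrow> conv (\<lambda>n. cs n *\<^sub>R xs n) 0)
     \<and> (\<forall>xs x. conv xs x \<longleftrightarrow>
           (\<forall>c. lt 0 c \<longrightarrow> (\<exists>N. \<forall>n>N. lt (x - c) (xs n) \<and> lt (xs n) (x + c))))"
proof -
  interpret normal_solid_vector_space conv le lt
    using assms by unfold_locales
  show ?thesis
    using conv_subseq conv_cong_eventually conv_scaleR_tendsto conv_scaleR_order_bounded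
      conv_scaleR_Bseq conv_iff_eventually_between[unfolded eventually_at_top_dense]
    by blast
qed

end
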